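(* Let $\mathfrak g=\mathfrak w_6$ be the real Lie algebra with basis $X_1,X_2,X_3,X_4,Z_1,Z_2$ whose only nonzero brackets (up to antisymmetry) are $[X_1,X_3]=-\frac12Z_1$, $[X_1,X_4]=-\frac12Z_2$, $[X_2,X_3]=-\frac12Z_2$, $[X_2,X_4]=\frac12Z_1$, with the abelian complex structure $J_1$ given by $J_1X_1=X_2$, $J_1X_3=-X_4$, $J_1Z_1=-Z_2$. Let $X=\Gamma\backslash W_6$ for a co-compact lattice $\Gamma$ in the corresponding simply connected group. With $T_1=X_1-iX_2$, $T_2=X_3+iX_4$, $W=Z_1+iZ_2$ (so $[\overline T_1,T_2]=-W$, $[\overline T_2,T_1]=\overline W$, and all other brackets among $T_1,T_2,W$ and their conjugates vanish) and dual $(1,0)$-forms $\omega^1,\omega^2,\omega^3$, write $\mu=\sum_{a,b=1}^3\mu^a_b\,\overline\omega^b\otimes e_a$ with $(e_1,e_2,e_3)=(T_1,T_2,W)$. Then: (i) $\mu$ is $\overline\partial$-closed iff $\mu^2_2=\mu^2_3=0$, and $\dim_{\mathbb C}H^1(X,\Theta_X)=6$, with harmonic representatives those closed $\mu$ with additionally $\mu^3_1=0$; (ii) a closed $\mu$ satisfies Condition A iff $\mu^1_1=\mu^1_3=0$, so the abelian deformations form a 4-dimensional subspace of $H^1(X,\Theta_X)$; (iii) for a harmonic $\mu$ the second Kuranishi term is $\phi_2=\mu^1_1\mu^3_3\,\overline\omega^2\otimes T_2$, and the deformation is integrable iff $\mu^1_3=0$, so the Kuranishi space has dimension 5.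
   Context: Condition A for $\mu$ (with $n=2$ indices $j,k\in\{1,2\}$ for $T_1,T_2$ and one central index for $W$): writing $[\overline T_k,T_j]=E_{kj}W+F_{kj}\overline W$, Condition A is $\sum_i(\mu^i_jF_{ki}-\mu^i_kF_{ji})=0$ for all $j,k\in\{1,2\}$ and $\sum_i\mu^i_3F_{ji}=0$ for all $j$, where $i$ ranges over $\{1,2\}$. The operator $\overline\partial$ on $\mathfrak g^{*(0,1)}\otimes\mathfrak g^{1,0}$ is given by $\overline\partial V=\sum_p\overline\omega^p\otimes[\overline e_p,V]^{1,0}$ for $V\in\mathfrak g^{1,0}$, $\overline\partial\overline\sigma=(d\overline\sigma)^{(0,2)}$ (which vanishes here), and $\overline\partial(\overline\sigma\otimes V)=\overline\partial\overline\sigma\otimes V-\overline\sigma\wedge\overline\partial V$; $H^1(X,\Theta_X)\cong\ker\overline\partial_1/\operatorname{im}\overline\partial_0$ computed on invariant elements, harmonic representatives being the orthogonal complement of $\operatorname{im}\overline\partial_0$ in $\ker\overline\partial_1$ for the Hermitian inner product making $\{\overline\omega^b\otimes e_a\}$ orthogonal. The Kuranishi series is $\phi_1=\mu$, $\phi_r=\frac12\sum_{s<r}\overline\partial^*\mathcal G\{\phi_s,\phi_{r-s}\}$ with $\{\cdot,\cdot\}$ the Schouten–Nijenhuis bracket; the Kuranishi space is the locus of harmonic $\mu$ near $0$ for which the resulting $\Phi=\sum\phi_r$ satisfies $\overline\partial\Phi+\frac12\{\Phi,\Phi\}=0$. *)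

theory Defs
  imports "HOL-Analysis.Analysis"
begin

section \<open>The real Lie algebra w6 and its complexification\<close>

datatype rb = X1 | X2 | X3 | X4 | Z1 | Z2

lemma UNIV_rb: "(UNIV :: rb set) = {X1, X2, X3, X4, Z1, Z2}"
  by (auto intro: rb.exhaust)

instance rb :: finite
  by standard (simp add: UNIV_rb)

text \<open>Index set {1,2,3} for the (1,0)-frame (T1, T2, W).\<close>
datatype i3 = I1 | I2 | I3

lemma UNIV_i3: "(UNIV :: i3 set) = {I1, I2, I3}"
  by (auto intro: i3.exhaust)

instance i3 :: finite
  by standard (simp add: UNIV_i3)

definition rvec :: "rb \<Rightarrow> real ^ rb" where
  "rvec k = (\<chi> j. if j = k then 1 else 0)"

definition w6_br0 :: "rb \<Rightarrow> rb \<Rightarrow> real ^ rb" where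
  "w6_br0 p q =
     (if (p, q) = (X1, X3) then (-1/2) *\<^sub>R rvec Z1
      else if (p, q) = (X1, X4) then (-1/2) *\<^sub>R rvec Z2
      else if (p, q) = (X2, X3) then (-1/2) *\<^sub>R rvec Z2
      else if (p, q) = (X2, X4) then (1/2) *\<^sub>R rvec Z1
      else 0)"

definition w6_br :: "rb \<Rightarrow> rb \<Rightarrow> real ^ rb" where
  "w6_br p q = w6_br0 p q - w6_br0 q p"

text \<open>Complex structure J1 on basis vectors: J1 X1 = X2, J1 X3 = -X4, J1 Z1 = -Z2
  (and hence, as J1^2 = -1, J1 X2 = -X1, J1 X4 = X3, J1 Z2 = Z1).\<close>
definition J1b :: "rb \<Rightarrow> real ^ rb" where
  "J1b p = (case p of X1 \<Rightarrow> rvec X2 | X2 \<Rightarrow> - rvec X1 | X3 \<Rightarrow> - rvec X4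
             | X4 \<Rightarrow> rvec X3 | Z1 \<Rightarrow> - rvec Z2 | Z2 \<Rightarrow> rvec Z1)"

text \<open>Complexification g_C = complex^rb; complex-bilinear bracket and complex-linear J.\<close>
definition cbr :: "complex ^ rb \<Rightarrow> complex ^ rb \<Rightarrow> complex ^ rb" where
  "cbr u v = (\<chi> k. \<Sum>p\<in>UNIV. \<Sum>q\<in>UNIV. u $ p * v $ q * complex_of_real (w6_br p q $ k))"

definition cJ :: "complex ^ rb \<Rightarrow> complex ^ rb" where
  "cJ u = (\<chi> k. \<Sum>p\<in>UNIV. u $ p * complex_of_real (J1b p $ k))"

definition cvec :: "rb \<Rightarrow> complex ^ rb" where
  "cvec k = (\<chi> j. if j = k then 1 else 0)"

definition vconj :: "complex ^ rb \<Rightarrow> complex ^ rb" where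
  "vconj u = (\<chi> k. cnj (u $ k))"

text \<open>The (1,0)-frame e1 = T1 = X1 - i X2, e2 = T2 = X3 + i X4, e3 = W = Z1 + i Z2,
  and its conjugate (0,1)-frame.\<close>
definition e :: "i3 \<Rightarrow> complex ^ rb" where
  "e a = (case a of I1 \<Rightarrow> cvec X1 - \<i> *s cvec X2
                  | I2 \<Rightarrow> cvec X3 + \<i> *s cvec X4
                  | I3 \<Rightarrow> cvec Z1 + \<i> *s cvec Z2)"

definition eb :: "i3 \<Rightarrow> complex ^ rb" where
  "eb a = vconj (e a)"

definition fr :: "bool \<Rightarrow> i3 \<Rightarrow> complex ^ rb" where
  "fr s a = (if s then eb a else e a)"

text \<open>Dual (1,0)-forms omega^a and (0,1)-forms conj omega^a (explicit formulas; the duality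
  with the frame is part of the main theorem).\<close>
definition \<omega> :: "i3 \<Rightarrow> complex ^ rb \<Rightarrow> complex" where
  "\<omega> a v = (case a of I1 \<Rightarrow> (v $ X1 + \<i> * v $ X2) / 2
                    | I2 \<Rightarrow> (v $ X3 - \<i> * v $ X4) / 2
                    | I3 \<Rightarrow> (v $ Z1 - \<i> * v $ Z2) / 2)"

definition \<omega>b :: "i3 \<Rightarrow> complex ^ rb \<Rightarrow> complex" where
  "\<omega>b a v = cnj (\<omega> a (vconj v))"

section \<open>Invariant Dolbeault complex with values in g^{1,0}\<close>

text \<open>Elements of g^{1,0}: coordinates v (V = sum v_a e_a).
  Elements of g^{*(0,1)} \<otimes> g^{1,0}: mu $ (a,b) = coefficient mu^a_b of conj(omega^b) \<otimes> e_a.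
  Elements of g^{*(0,2)} \<otimes> g^{1,0}: alternating arrays psi a c d = e-coordinate a of
  psi(conj e_c, conj e_d); similarly (0,3) with psi a c d f.
  Convention: (alpha \<and> beta)(X,Y) = alpha X beta Y - alpha Y beta X.\<close>

type_synonym A0 = "complex ^ i3"
type_synonym A1 = "complex ^ (i3 \<times> i3)"
type_synonym A2 = "i3 \<Rightarrow> i3 \<Rightarrow> i3 \<Rightarrow> complex"
type_synonym A3 = "i3 \<Rightarrow> i3 \<Rightarrow> i3 \<Rightarrow> i3 \<Rightarrow> complex"

definition vec10 :: "A0 \<Rightarrow> complex ^ rb" where
  "vec10 v = (\<Sum>a\<in>UNIV. (v $ a) *s e a)"

definition kron :: "i3 \<Rightarrow> i3 \<Rightarrow> complex" where
  "kron x y = (if x = y then 1 else 0)"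

text \<open>dbar e_a = sum_p conj(omega^p) \<otimes> [conj e_p, e_a]^{1,0}; Dbe a a' p is its coefficient
  of conj(omega^p) \<otimes> e_{a'}.\<close>
definition Dbe :: "i3 \<Rightarrow> i3 \<Rightarrow> i3 \<Rightarrow> complex" where
  "Dbe a a' p = \<omega> a' (cbr (eb p) (e a))"

text \<open>(0,2)-part of d conj(omega^b) for the invariant form: d alpha(X,Y) = - alpha([X,Y]).\<close>
definition dform1 :: "i3 \<Rightarrow> i3 \<Rightarrow> i3 \<Rightarrow> complex" where
  "dform1 b c d = - \<omega>b b (cbr (eb c) (eb d))"

text \<open>(0,3)-part of d of an invariant (0,2)-form sigma (given as alternating array):
  d sigma(X,Y,Z) = - sigma([X,Y],Z) + sigma([X,Z],Y) - sigma([Y,Z],X).\<close>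
definition form2_app :: "(i3 \<Rightarrow> i3 \<Rightarrow> complex) \<Rightarrow> complex ^ rb \<Rightarrow> i3 \<Rightarrow> complex" where
  "form2_app \<sigma> Y d = (\<Sum>c\<in>UNIV. \<omega>b c Y * \<sigma> c d)"

definition dform2 :: "(i3 \<Rightarrow> i3 \<Rightarrow> complex) \<Rightarrow> i3 \<Rightarrow> i3 \<Rightarrow> i3 \<Rightarrow> complex" where
  "dform2 \<sigma> x y z = - form2_app \<sigma> (cbr (eb x) (eb y)) z + form2_app \<sigma> (cbr (eb x) (eb z)) y
                    - form2_app \<sigma> (cbr (eb y) (eb z)) x"

definition dbar0 :: "A0 \<Rightarrow> A1" where
  "dbar0 v = (\<chi> i. \<omega> (fst i) (cbr (eb (snd i)) (vec10 v)))"

text \<open>dbar_1(conj sigma \<otimes> V) = dbar(conj sigma) \<otimes> V - conj sigma \<and> dbar V, extended linearly.\<close>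
definition dbar1 :: "A1 \<Rightarrow> A2" where
  "dbar1 \<mu> = (\<lambda>a' c d. \<Sum>a\<in>UNIV. \<Sum>b\<in>UNIV. \<mu> $ (a, b) *
      (dform1 b c d * kron a a' - (kron b c * Dbe a a' d - kron b d * Dbe a a' c)))"

text \<open>dbar_2(conj sigma \<otimes> V) = dbar(conj sigma) \<otimes> V + conj sigma \<and> dbar V for a (0,2)-form sigma;
  psi = (1/2) sum_{a,b,c} psi a b c conj(omega^b) \<and> conj(omega^c) \<otimes> e_a.\<close>
definition wedge21 :: "(i3 \<Rightarrow> i3 \<Rightarrow> complex) \<Rightarrow> (i3 \<Rightarrow> complex) \<Rightarrow> i3 \<Rightarrow> i3 \<Rightarrow> i3 \<Rightarrow> complex" where
  "wedge21 \<sigma> \<tau> x y z = \<sigma> x y * \<tau> z - \<sigma> x z * \<tau> y + \<sigma> y z * \<tau> x"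

definition dbar2 :: "A2 \<Rightarrow> A3" where
  "dbar2 \<psi> = (\<lambda>a' x y z. \<Sum>a\<in>UNIV. \<Sum>b\<in>UNIV. \<Sum>c\<in>UNIV. (1/2) * \<psi> a b c *
      (dform2 (\<lambda>p q. kron b p * kron c q - kron b q * kron c p) x y z * kron a a'
       + wedge21 (\<lambda>p q. kron b p * kron c q - kron b q * kron c p) (\<lambda>p. Dbe a a' p) x y z))"

definition alt2 :: "A2 \<Rightarrow> bool" where
  "alt2 \<psi> \<longleftrightarrow> (\<forall>a c d. \<psi> a c d = - \<psi> a d c)"

definition alt3 :: "A3 \<Rightarrow> bool" where
  "alt3 \<chi>' \<longleftrightarrow> (\<forall>a x y z. \<chi>' a x y z = - \<chi>' a y x z \<and> \<chi>' a x y z = - \<chi>' a x z y)"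

text \<open>Hermitian inner products (linear in the first argument) for which the elements
  e_a, conj(omega^b) \<otimes> e_a, conj(omega^{b}) \<and> conj(omega^c) \<otimes> e_a (b<c), ... are orthonormal.\<close>
definition ip0 :: "A0 \<Rightarrow> A0 \<Rightarrow> complex" where
  "ip0 v w = (\<Sum>a\<in>UNIV. v $ a * cnj (w $ a))"

definition ip1 :: "A1 \<Rightarrow> A1 \<Rightarrow> complex" where
  "ip1 \<mu> \<nu> = (\<Sum>i\<in>UNIV. \<mu> $ i * cnj (\<nu> $ i))"

definition ip2 :: "A2 \<Rightarrow> A2 \<Rightarrow> complex" where
  "ip2 \<psi> \<chi>' = (1/2) * (\<Sum>a\<in>UNIV. \<Sum>c\<in>UNIV. \<Sum>d\<in>UNIV. \<psi> a c d * cnj (\<chi>' a c d))"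

definition ip3 :: "A3 \<Rightarrow> A3 \<Rightarrow> complex" where
  "ip3 \<psi> \<chi>' = (1/6) * (\<Sum>a\<in>UNIV. \<Sum>x\<in>UNIV. \<Sum>y\<in>UNIV. \<Sum>z\<in>UNIV. \<psi> a x y z * cnj (\<chi>' a x y z))"

definition dbar0_adj :: "A1 \<Rightarrow> A0" where
  "dbar0_adj \<mu> = (THE v. \<forall>w. ip0 w v = ip1 (dbar0 w) \<mu>)"

definition dbar1_adj :: "A2 \<Rightarrow> A1" where
  "dbar1_adj \<psi> = (THE \<mu>. \<forall>\<nu>. ip1 \<nu> \<mu> = ip2 (dbar1 \<nu>) \<psi>)"

definition dbar2_adj :: "A3 \<Rightarrow> A2" where
  "dbar2_adj \<chi>' = (THE \<psi>. alt2 \<psi> \<and> (\<forall>\<phi>. alt2 \<phi> \<longrightarrow> ip2 \<phi> \<psi> = ip3 (dbar2 \<phi>) \<chi>'))"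

definition lap2 :: "A2 \<Rightarrow> A2" where
  "lap2 \<psi> = (\<lambda>a c d. dbar1 (dbar1_adj \<psi>) a c d + dbar2_adj (dbar2 \<psi>) a c d)"

definition harm2 :: "A2 set" where
  "harm2 = {\<psi>. alt2 \<psi> \<and> lap2 \<psi> = (\<lambda>_ _ _. 0)}"

definition Hproj2 :: "A2 \<Rightarrow> A2" where
  "Hproj2 \<psi> = (THE h. h \<in> harm2 \<and> (\<forall>k\<in>harm2. ip2 (\<lambda>a c d. \<psi> a c d - h a c d) k = 0))"

definition Green2 :: "A2 \<Rightarrow> A2" where
  "Green2 \<psi> = (THE \<eta>. alt2 \<eta> \<and> (\<forall>k\<in>harm2. ip2 \<eta> k = 0) \<and>
                      lap2 \<eta> = (\<lambda>a c d. \<psi> a c d - Hproj2 \<psi> a c d))"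

section \<open>Schouten--Nijenhuis bracket\<close>

text \<open>An element phi of g^{*(0,1)} \<otimes> g^{1,0} acting on g_C (extended by zero on g^{1,0}).\<close>
definition app1 :: "A1 \<Rightarrow> complex ^ rb \<Rightarrow> complex ^ rb" where
  "app1 \<phi> Y = (\<Sum>b\<in>UNIV. \<Sum>a\<in>UNIV. (\<omega>b b Y * \<phi> $ (a, b)) *s e a)"

text \<open>Bracket of two g^{1,0}-valued (0,1)-forms (Froelicher--Nijenhuis form of the
  Schouten--Nijenhuis bracket), evaluated on conj e_c, conj e_d.\<close>
definition SN :: "A1 \<Rightarrow> A1 \<Rightarrow> A2" where
  "SN \<phi> \<psi> = (\<lambda>a c d. \<omega> a (
       cbr (app1 \<phi> (eb c)) (app1 \<psi> (eb d)) + cbr (app1 \<psi> (eb c)) (app1 \<phi> (eb d))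
     - app1 \<phi> (cbr (app1 \<psi> (eb c)) (eb d) + cbr (eb c) (app1 \<psi> (eb d)))
     - app1 \<psi> (cbr (app1 \<phi> (eb c)) (eb d) + cbr (eb c) (app1 \<phi> (eb d)))
     + app1 \<phi> (app1 \<psi> (cbr (eb c) (eb d))) + app1 \<psi> (app1 \<phi> (cbr (eb c) (eb d)))))"

section \<open>Harmonic elements, H^1, Condition A, Kuranishi series\<close>

definition closed1 :: "A1 \<Rightarrow> bool" where
  "closed1 \<mu> \<longleftrightarrow> dbar1 \<mu> = (\<lambda>_ _ _. 0)"

definition harmonic1 :: "A1 \<Rightarrow> bool" where
  "harmonic1 \<mu> \<longleftrightarrow> closed1 \<mu> \<and> (\<forall>v. ip1 \<mu> (dbar0 v) = 0)"

text \<open>Complex dimension of the image in H^1 = ker dbar_1 / im dbar_0 of a set S of closed elements.\<close>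
definition dim_in_H1 :: "A1 set \<Rightarrow> nat" where
  "dim_in_H1 S = vec.dim {x + y | x y. x \<in> S \<and> y \<in> range dbar0} - vec.dim (range dbar0)"

definition dim_H1 :: nat where
  "dim_H1 = dim_in_H1 {\<mu>. closed1 \<mu>}"

text \<open>[conj T_k, T_j] = E_kj W + F_kj conj W; F_kj is the conj W-coefficient.\<close>
definition Fc :: "i3 \<Rightarrow> i3 \<Rightarrow> complex" where
  "Fc k j = \<omega>b I3 (cbr (eb k) (e j))"

definition conditionA :: "A1 \<Rightarrow> bool" where
  "conditionA \<mu> \<longleftrightarrow>
     (\<forall>j\<in>{I1, I2}. \<forall>k\<in>{I1, I2}.
        (\<Sum>i\<in>{I1, I2}. \<mu> $ (i, j) * Fc k i - \<mu> $ (i, k) * Fc j i) = 0) \<and>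
     (\<forall>j\<in>{I1, I2}. (\<Sum>i\<in>{I1, I2}. \<mu> $ (i, I3) * Fc j i) = 0)"

definition dstarG :: "A2 \<Rightarrow> A1" where
  "dstarG \<psi> = dbar1_adj (Green2 \<psi>)"

text \<open>Kuranishi series phi_1 = mu, phi_r = -(1/2) sum_{0<s<r} dbar* G {phi_s, phi_{r-s}}
  (sign fixed so that Phi solves dbar Phi + 1/2 {Phi,Phi} = 0 modulo harmonic terms).\<close>
function kur :: "A1 \<Rightarrow> nat \<Rightarrow> A1" where
  "kur \<mu> r = (if r = 0 then 0 else if r = 1 then \<mu> else
      (- 1/2 :: complex) *s (\<Sum>s\<in>{1..<r}. dstarG (SN (kur \<mu> s) (kur \<mu> (r - s)))))"
  by auto
termination
  by (relation "Wellfounded.measure snd") auto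

definition integrable :: "A1 \<Rightarrow> bool" where
  "integrable \<mu> \<longleftrightarrow> summable (kur \<mu>) \<and>
     (\<forall>a c d. dbar1 (suminf (kur \<mu>)) a c d
              + (1/2) * SN (suminf (kur \<mu>)) (suminf (kur \<mu>)) a c d = 0)"

end

theory Submission
  imports Defs
begin

text \<open>All objects are invariant, so everything is linear algebra in the frame \<open>(T1, T2, W)\<close> and
  its conjugate. The only nonzero brackets are \<open>[conj T1, T2] = -W\<close> and
  \<open>[conj T2, T1] = conj W\<close>; hence \<open>dbar T2 = -conj \<omega>\<^sup>1 \<otimes> W\<close> is the only nonzero value of
  \<open>dbar\<close> on the frame, \<open>dbar \<mu>\<close> only sees the \<open>T2\<close>-row of \<open>\<mu>\<close>, and \<open>{\<phi>, \<psi>}\<close> only involves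
  the entries \<open>\<phi>\<^sup>1\<^sub>c\<close> and \<open>\<phi>\<^sup>a\<^sub>3\<close>. The adjoints of \<open>dbar\<close> are found by testing against
  coordinate vectors; on alternating (0,2)-forms the Laplacian is a coordinate projection, so
  the Green operator is that projection and \<open>dbar\<^sup>* G {\<phi>, \<psi>}\<close> is supported on the entry
  \<open>(2,2)\<close> and depends only on the entries \<open>(1,1)\<close> and \<open>(3,3)\<close>. As \<open>\<phi>\<^sub>2\<close> has no such
  entries, the Kuranishi series stops at \<open>\<phi>\<^sub>2\<close>, and integrability reduces to the single
  equation \<open>(\<mu>\<^sup>1\<^sub>3)\<^sup>2 = 0\<close>. All dimension counts are dimensions of coordinate subspaces.\<close>

section \<open>The frame and the bracket\<close>

lemma sum_UNIV_rb: "(\<Sum>p\<in>UNIV. f p) = f X1 + f X2 + f X3 + f X4 + f Z1 + f Z2"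
  by (simp add: UNIV_rb add.assoc)

lemma sum_UNIV_i3: "(\<Sum>p\<in>UNIV. f p) = f I1 + f I2 + f I3"
  by (simp add: UNIV_i3 add.assoc)

lemma sum_UNIV_i3_pair: "(\<Sum>i\<in>(UNIV :: (i3 \<times> i3) set). f i) = (\<Sum>a\<in>UNIV. \<Sum>b\<in>UNIV. f (a, b))"
  by (simp add: UNIV_Times_UNIV[symmetric] sum.cartesian_product del: UNIV_Times_UNIV)

lemma all_rb_eq: "(\<forall>k. P k) \<longleftrightarrow> P X1 \<and> P X2 \<and> P X3 \<and> P X4 \<and> P Z1 \<and> P Z2"
  by (metis rb.exhaust)

lemma all_i3_eq: "(\<forall>k. P k) \<longleftrightarrow> P I1 \<and> P I2 \<and> P I3"
  by (metis i3.exhaust)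

lemma cbr_eq:
  "cbr u v = (\<chi> k.
     if k = Z1 then (-1/2) * (u$X1 * v$X3 - u$X3 * v$X1) + (1/2) * (u$X2 * v$X4 - u$X4 * v$X2)
     else if k = Z2 then (-1/2) * (u$X1 * v$X4 - u$X4 * v$X1) + (-1/2) * (u$X2 * v$X3 - u$X3 * v$X2)
     else 0)"
proof -
  have "complex_of_real (w6_br p q $ k) =
    (if k = Z1 then (if (p,q) = (X1,X3) then -1/2 else if (p,q) = (X3,X1) then 1/2
        else if (p,q) = (X2,X4) then 1/2 else if (p,q) = (X4,X2) then -1/2 else 0)
     else if k = Z2 then (if (p,q) = (X1,X4) then -1/2 else if (p,q) = (X4,X1) then 1/2
        else if (p,q) = (X2,X3) then -1/2 else if (p,q) = (X3,X2) then 1/2 else 0)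
     else 0)" for p q k
    by (cases p; cases q; cases k; simp add: w6_br_def w6_br0_def rvec_def)
  then show ?thesis
    unfolding cbr_def vec_eq_iff by (auto simp: sum_UNIV_rb algebra_simps)
qed

lemma cbr_antisym: "cbr u v = - cbr v u"
  by (simp add: cbr_eq vec_eq_iff algebra_simps)

lemma e_component:
  "e a $ k = (case a of
      I1 \<Rightarrow> (if k = X1 then 1 else if k = X2 then - \<i> else 0)
    | I2 \<Rightarrow> (if k = X3 then 1 else if k = X4 then \<i> else 0)
    | I3 \<Rightarrow> (if k = Z1 then 1 else if k = Z2 then \<i> else 0))"
  by (cases a; cases k; simp add: e_def cvec_def)

lemma eb_component:
  "eb a $ k = (case a of
      I1 \<Rightarrow> (if k = X1 then 1 else if k = X2 then \<i> else 0)
    | I2 \<Rightarrow> (if k = X3 then 1 else if k = X4 then - \<i> else 0)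
    | I3 \<Rightarrow> (if k = Z1 then 1 else if k = Z2 then - \<i> else 0))"
  by (cases a; cases k; simp add: eb_def vconj_def e_component)

lemma cJ_e: "cJ (e a) = \<i> *s e a"
  unfolding cJ_def vec_eq_iff
  by (cases a; simp add: all_rb_eq sum_UNIV_rb e_component J1b_def rvec_def)

lemma cbr_e_e: "cbr (e a) (e b) = 0"
  by (cases a; cases b; simp add: cbr_eq e_component vec_eq_iff all_rb_eq)

lemma cbr_eb_eb: "cbr (eb a) (eb b) = 0"
  by (cases a; cases b; simp add: cbr_eq eb_component vec_eq_iff all_rb_eq)

lemma cbr_eb_e:
  "cbr (eb a) (e b) = (if a = I1 \<and> b = I2 then - e I3 else if a = I2 \<and> b = I1 then eb I3 else 0)"
  by (cases a; cases b; simp add: cbr_eq eb_component e_component vec_eq_iff all_rb_eq; algebra)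

lemma cbr_fr:
  "cbr (fr s a) (fr t b) =
     (if (s, a, t, b) = (True, I1, False, I2) then - e I3
      else if (s, a, t, b) = (False, I2, True, I1) then e I3
      else if (s, a, t, b) = (True, I2, False, I1) then eb I3
      else if (s, a, t, b) = (False, I1, True, I2) then - eb I3
      else 0)"
  using cbr_antisym[of "e a" "eb b"]
  by (cases s; cases t; simp add: fr_def cbr_e_e cbr_eb_eb cbr_eb_e)

lemma cbr_vec10_vec10: "cbr (vec10 u) (vec10 v) = 0"
  by (simp add: cbr_eq vec10_def vec_eq_iff sum_UNIV_i3 e_component algebra_simps)

lemma cbr_eb_vec10:
  "cbr (eb c) (vec10 v) = (if c = I1 then - v$I2 *s e I3 else if c = I2 then v$I1 *s eb I3 else 0)"
  by (cases c) (simp_all add: cbr_eq vec10_def vec_eq_iff all_rb_eq sum_UNIV_i3 e_component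
      eb_component field_simps)

lemma module_hom_omega: "module_hom (*s) (*) (\<omega> a)"
  unfolding module_hom_iff
  by (cases a) (auto simp: \<omega>_def vec.module_axioms vector_space_over_itself.module_axioms field_simps)

lemma module_hom_omegab: "module_hom (*s) (*) (\<omega>b a)"
  unfolding module_hom_iff
  by (cases a) (auto simp: \<omega>b_def \<omega>_def vconj_def vec.module_axioms
      vector_space_over_itself.module_axioms field_simps)

lemmas omega_linear [simp] = module_hom.zero[OF module_hom_omega] module_hom.add[OF module_hom_omega]
  module_hom.diff[OF module_hom_omega] module_hom.neg[OF module_hom_omega]
  module_hom.scale[OF module_hom_omega]

lemmas omegab_linear [simp] = module_hom.zero[OF module_hom_omegab]
  module_hom.add[OF module_hom_omegab] module_hom.neg[OF module_hom_omegab]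
  module_hom.scale[OF module_hom_omegab]

lemma omega_e: "\<omega> a (e b) = kron a b"
  by (cases a; cases b; simp add: \<omega>_def e_component kron_def)

lemma omega_eb: "\<omega> a (eb b) = 0"
  by (cases a; cases b; simp add: \<omega>_def eb_component)

lemma omegab_eb: "\<omega>b a (eb b) = kron a b"
  by (cases a; cases b; simp add: \<omega>b_def \<omega>_def vconj_def eb_component kron_def)

lemma omegab_e: "\<omega>b a (e b) = 0"
  by (cases a; cases b; simp add: \<omega>b_def \<omega>_def vconj_def e_component)

lemma omega_vec10: "\<omega> a (vec10 v) = v $ a"
  by (cases a; simp add: vec10_def sum_UNIV_i3 omega_e kron_def)

lemma module_hom_app1: "module_hom (*s) (*s) (app1 \<phi>)"
  unfolding module_hom_iff app1_def
  by (simp add: vec.module_axioms algebra_simps sum.distrib scalar_mult_eq_scaleR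
      sum_distrib_left vec_eq_iff)

lemmas app1_linear [simp] = module_hom.zero[OF module_hom_app1] module_hom.add[OF module_hom_app1]
  module_hom.diff[OF module_hom_app1] module_hom.neg[OF module_hom_app1]
  module_hom.scale[OF module_hom_app1]

lemma app1_e: "app1 \<phi> (e a) = 0"
  by (simp add: app1_def omegab_e)

lemma app1_eb: "app1 \<phi> (eb c) = vec10 (\<chi> a. \<phi> $ (a, c))"
  by (cases c; simp add: app1_def vec10_def omegab_eb kron_def sum_UNIV_i3)

section \<open>The Dolbeault operators and the Schouten--Nijenhuis bracket\<close>

lemma Dbe_eq: "Dbe a a' p = (if a = I2 \<and> a' = I3 \<and> p = I1 then -1 else 0)"
  by (cases a; cases a'; cases p; simp add: Dbe_def cbr_eb_e omega_e omega_eb kron_def)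

lemma dform1_eq_0: "dform1 b c d = 0"
  by (simp add: dform1_def cbr_eb_eb)

lemma dform2_eq_0: "dform2 \<sigma> x y z = 0"
  by (simp add: dform2_def form2_app_def cbr_eb_eb)

lemma dbar0_eq: "dbar0 v = (\<chi> i. if i = (I3, I1) then - v$I2 else 0)"
  unfolding dbar0_def vec_eq_iff cbr_eb_vec10
  by (auto simp: all_i3_eq omega_e omega_eb kron_def)

lemma dbar1_eq:
  "dbar1 \<mu> = (\<lambda>a c d. if a = I3 then \<mu>$(I2,c) * kron d I1 - \<mu>$(I2,d) * kron c I1 else 0)"
  unfolding fun_eq_iff all_i3_eq by (simp add: dbar1_def Dbe_eq dform1_eq_0 sum_UNIV_i3 kron_def)

lemma sum_wedge21_basis:
  "(\<Sum>b\<in>UNIV. \<Sum>c\<in>UNIV. F b c * wedge21 (\<lambda>p q. kron b p * kron c q - kron b q * kron c p) \<tau> x y z)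
     = (F x y - F y x) * \<tau> z - (F x z - F z x) * \<tau> y + (F y z - F z y) * \<tau> x"
  by (cases x; cases y; cases z; simp add: wedge21_def sum_UNIV_i3 kron_def algebra_simps)

lemma dbar2_eq:
  "dbar2 \<psi> a x y z = (if a = I3 then - (1/2) * ((\<psi> I2 x y - \<psi> I2 y x) * kron z I1
     - (\<psi> I2 x z - \<psi> I2 z x) * kron y I1 + (\<psi> I2 y z - \<psi> I2 z y) * kron x I1) else 0)"
  (is "_ = ?rhs")
proof -
  have "dbar2 \<psi> a x y z = (\<Sum>a'\<in>UNIV.
      (1/2 * \<psi> a' x y - 1/2 * \<psi> a' y x) * Dbe a' a z - (1/2 * \<psi> a' x z - 1/2 * \<psi> a' z x) * Dbe a' a y
      + (1/2 * \<psi> a' y z - 1/2 * \<psi> a' z y) * Dbe a' a x)"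
    unfolding dbar2_def dform2_eq_0 mult_zero_left add_0_left sum_wedge21_basis ..
  also have "\<dots> = ?rhs"
    by (simp add: Dbe_eq sum_UNIV_i3 kron_def field_simps)
  finally show ?thesis .
qed

lemma app1_cbr_eb_vec10:
  "app1 \<phi> (cbr (eb c) (vec10 v)) = (if c = I2 then v$I1 *s vec10 (\<chi> a. \<phi> $ (a, I3)) else 0)"
  by (simp add: cbr_eb_vec10 app1_e app1_eb)

lemma SN_eq:
  "SN \<phi> \<psi> = (\<lambda>a c d. - \<phi>$(a,I3) * (\<psi>$(I1,d) * kron c I2 - \<psi>$(I1,c) * kron d I2)
                    - \<psi>$(a,I3) * (\<phi>$(I1,d) * kron c I2 - \<phi>$(I1,c) * kron d I2))"
proof (intro ext)
  fix a c d
  have bracket_term: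
    "app1 \<phi> (cbr (app1 \<psi> (eb c)) (eb d) + cbr (eb c) (app1 \<psi> (eb d)))
       = (\<psi>$(I1,d) * kron c I2 - \<psi>$(I1,c) * kron d I2) *s vec10 (\<chi> a. \<phi> $ (a, I3))" for \<phi> \<psi>
    using cbr_antisym[of "vec10 (\<chi> a. \<psi> $ (a, c))" "eb d"]
    by (cases c; cases d; simp add: app1_eb app1_cbr_eb_vec10 kron_def)
  show "SN \<phi> \<psi> a c d = - \<phi>$(a,I3) * (\<psi>$(I1,d) * kron c I2 - \<psi>$(I1,c) * kron d I2)
                    - \<psi>$(a,I3) * (\<phi>$(I1,d) * kron c I2 - \<phi>$(I1,c) * kron d I2)"
    unfolding SN_def bracket_term
    by (simp add: app1_eb cbr_vec10_vec10 cbr_eb_eb omega_vec10 algebra_simps)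
qed

lemma Fc_eq: "Fc k j = (if k = I2 \<and> j = I1 then 1 else 0)"
  by (cases k; cases j; simp add: Fc_def cbr_eb_e omegab_e omegab_eb kron_def)

lemma closed1_iff: "closed1 \<mu> \<longleftrightarrow> \<mu> $ (I2, I2) = 0 \<and> \<mu> $ (I2, I3) = 0"
  unfolding closed1_def dbar1_eq fun_eq_iff by (auto simp: all_i3_eq kron_def)

lemma harmonic1_iff: "harmonic1 \<mu> \<longleftrightarrow> closed1 \<mu> \<and> \<mu> $ (I3, I1) = 0"
proof -
  have ip1_dbar0: "ip1 \<mu> (dbar0 v) = - \<mu> $ (I3, I1) * cnj (v $ I2)" for v
    unfolding ip1_def dbar0_eq by (simp add: sum_UNIV_i3_pair sum_UNIV_i3)
  have "(\<forall>v. ip1 \<mu> (dbar0 v) = 0) \<longleftrightarrow> \<mu> $ (I3, I1) = 0"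
  proof
    assume "\<forall>v. ip1 \<mu> (dbar0 v) = 0"
    then have "ip1 \<mu> (dbar0 (\<chi> a. 1)) = 0"
      by blast
    then show "\<mu> $ (I3, I1) = 0"
      by (simp add: ip1_dbar0)
  qed (simp add: ip1_dbar0)
  then show ?thesis
    unfolding harmonic1_def by blast
qed

lemma conditionA_iff: "conditionA \<mu> \<longleftrightarrow> \<mu> $ (I1, I1) = 0 \<and> \<mu> $ (I1, I3) = 0"
  unfolding conditionA_def Fc_eq by simp

section \<open>Adjoints, Laplacian and Green operator\<close>

lemma ip1_axis: "ip1 (axis j 1) \<mu> = cnj (\<mu> $ j)"
proof -
  have summand: "(\<lambda>i. axis j 1 $ i * cnj (\<mu> $ i)) = (\<lambda>i. if i = j then cnj (\<mu> $ j) else 0)"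
    by (auto simp: axis_def)
  show ?thesis
    unfolding ip1_def summand by simp
qed

lemma vec_eq_if_ip1_eq:
  assumes "\<And>\<nu>. ip1 \<nu> \<mu> = ip1 \<nu> \<mu>'"
  shows "\<mu> = \<mu>'"
proof -
  have "cnj (\<mu> $ j) = cnj (\<mu>' $ j)" for j
    using assms[of "axis j 1"] by (simp only: ip1_axis)
  then show ?thesis
    by (simp add: vec_eq_iff)
qed

lemma ip2_self_eq_0_iff: "ip2 f f = 0 \<longleftrightarrow> f = (\<lambda>_ _ _. 0)"
proof
  let ?S = "\<Sum>a\<in>UNIV. \<Sum>c\<in>UNIV. \<Sum>d\<in>UNIV. (cmod (f a c d))\<^sup>2"
  have norm_square: "z * cnj z = complex_of_real ((cmod z)\<^sup>2)" for z
    by (metis complex_norm_square)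
  have "ip2 f f = (1/2) * complex_of_real ?S"
    unfolding ip2_def norm_square of_real_sum ..
  moreover assume "ip2 f f = 0"
  ultimately have "complex_of_real ?S = 0"
    by (simp del: of_real_sum)
  then have "?S = 0"
    by (simp only: of_real_eq_0_iff)
  then show "f = (\<lambda>_ _ _. 0)"
    by (simp add: sum_nonneg_eq_0_iff sum_nonneg fun_eq_iff)
qed (simp add: ip2_def)

lemma ip2_diff_left: "ip2 (\<lambda>a c d. f a c d - g a c d) k = ip2 f k - ip2 g k"
  by (simp add: ip2_def sum_subtractf algebra_simps)

lemma ip2_diff_right: "ip2 k (\<lambda>a c d. f a c d - g a c d) = ip2 k f - ip2 k g"
  by (simp add: ip2_def sum_subtractf algebra_simps)

lemma alt2_diff: "alt2 f \<Longrightarrow> alt2 g \<Longrightarrow> alt2 (\<lambda>a c d. f a c d - g a c d)"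
  unfolding alt2_def by (metis minus_diff_eq diff_minus_eq_add uminus_add_conv_diff)

lemma alt2_entries:
  assumes "alt2 \<phi>"
  shows "\<phi> a I1 I1 = 0" "\<phi> a I2 I2 = 0" "\<phi> a I3 I3 = 0"
    "\<phi> a I2 I1 = - \<phi> a I1 I2" "\<phi> a I3 I1 = - \<phi> a I1 I3" "\<phi> a I3 I2 = - \<phi> a I2 I3"
proof -
  have swap: "\<phi> a c d = - \<phi> a d c" for c d
    using assms unfolding alt2_def by blast
  have self_neg: "x = - x \<Longrightarrow> x = 0" for x :: complex
    by simp
  show "\<phi> a I1 I1 = 0" "\<phi> a I2 I2 = 0" "\<phi> a I3 I3 = 0"
    by (rule self_neg, rule swap)+
  show "\<phi> a I2 I1 = - \<phi> a I1 I2" "\<phi> a I3 I1 = - \<phi> a I1 I3" "\<phi> a I3 I2 = - \<phi> a I2 I3"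
    by (rule swap)+
qed

lemma dbar1_adj_eq:
  "dbar1_adj \<psi> = (\<chi> i. if fst i = I2 then (\<psi> I3 (snd i) I1 - \<psi> I3 I1 (snd i)) / 2 else 0)"
  (is "_ = ?m")
proof -
  have adjoint: "ip1 \<nu> ?m = ip2 (dbar1 \<nu>) \<psi>" for \<nu>
  proof -
    have "ip1 \<nu> ?m = \<nu>$(I2,I2) * cnj ((\<psi> I3 I2 I1 - \<psi> I3 I1 I2) / 2)
                     + \<nu>$(I2,I3) * cnj ((\<psi> I3 I3 I1 - \<psi> I3 I1 I3) / 2)"
      unfolding ip1_def by (simp add: sum_UNIV_i3_pair sum_UNIV_i3)
    also have "\<dots> = ip2 (dbar1 \<nu>) \<psi>"
      unfolding ip2_def dbar1_eq by (simp add: sum_UNIV_i3 kron_def algebra_simps diff_divide_distrib)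
    finally show ?thesis .
  qed
  show ?thesis
    unfolding dbar1_adj_def
  proof (rule the_equality)
    show "\<forall>\<nu>. ip1 \<nu> ?m = ip2 (dbar1 \<nu>) \<psi>"
      using adjoint by blast
  next
    fix \<mu> assume "\<forall>\<nu>. ip1 \<nu> \<mu> = ip2 (dbar1 \<nu>) \<psi>"
    then show "\<mu> = ?m"
      using adjoint by (intro vec_eq_if_ip1_eq) simp
  qed
qed

text \<open>The W-component of a (0,3)-form with \<open>conj T1\<close> inserted into each slot in turn; it is all
  that the adjoint of \<open>dbar2\<close> sees.\<close>
definition ins_W1 :: "A3 \<Rightarrow> i3 \<Rightarrow> i3 \<Rightarrow> complex" where
  "ins_W1 \<chi>' p q = \<chi>' I3 p q I1 - \<chi>' I3 p I1 q + \<chi>' I3 I1 p q"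

lemma dbar2_adj_eq:
  "dbar2_adj \<chi>' = (\<lambda>a p q. if a = I2 then - (ins_W1 \<chi>' p q - ins_W1 \<chi>' q p) / 6 else 0)"
  (is "_ = ?m")
proof -
  have alt2_m: "alt2 ?m"
    unfolding alt2_def by (simp add: diff_divide_distrib)
  have adjoint: "ip2 \<phi> ?m = ip3 (dbar2 \<phi>) \<chi>'" if "alt2 \<phi>" for \<phi>
  proof -
    let ?c = "\<lambda>p q. cnj (ins_W1 \<chi>' p q) - cnj (ins_W1 \<chi>' q p)"
    let ?E = "- (1/6) * (\<phi> I2 I1 I2 * ?c I1 I2 + \<phi> I2 I1 I3 * ?c I1 I3 + \<phi> I2 I2 I3 * ?c I2 I3)"
    have "ip2 \<phi> ?m = ?E"
      unfolding ip2_def using alt2_entries[OF that]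
      by (simp add: sum_UNIV_i3 algebra_simps diff_divide_distrib)
    moreover have "ip3 (dbar2 \<phi>) \<chi>' = ?E"
      unfolding ip3_def dbar2_eq ins_W1_def using alt2_entries[OF that]
      by (simp add: sum_UNIV_i3 kron_def algebra_simps)
    ultimately show ?thesis
      by simp
  qed
  have unique: "\<psi> = ?m" if "alt2 \<psi>" "\<forall>\<phi>. alt2 \<phi> \<longrightarrow> ip2 \<phi> \<psi> = ip3 (dbar2 \<phi>) \<chi>'" for \<psi>
  proof -
    let ?k = "\<lambda>a c d. \<psi> a c d - ?m a c d"
    have "alt2 ?k"
      using that alt2_m by (simp add: alt2_diff)
    then have "ip2 ?k ?k = ip2 ?k \<psi> - ip2 ?k ?m"
      by (simp only: ip2_diff_right)
    also have "\<dots> = 0"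
      using that adjoint \<open>alt2 ?k\<close> by simp
    finally have "ip2 ?k ?k = 0" .
    then show ?thesis
      by (simp add: ip2_self_eq_0_iff fun_eq_iff)
  qed
  show ?thesis
    unfolding dbar2_adj_def by (rule the_equality) (use alt2_m adjoint unique in blast)+
qed

definition lap2_proj :: "A2 \<Rightarrow> A2" where
  "lap2_proj \<psi> = (\<lambda>a c d.
     if (a = I3 \<and> (c = I1) \<noteq> (d = I1)) \<or> (a = I2 \<and> c \<noteq> I1 \<and> d \<noteq> I1 \<and> c \<noteq> d)
     then \<psi> a c d else 0)"

lemma lap2_eq:
  assumes "alt2 \<psi>"
  shows "lap2 \<psi> = lap2_proj \<psi>"
proof (intro ext)
  fix a c d
  show "lap2 \<psi> a c d = lap2_proj \<psi> a c d"
    unfolding lap2_def lap2_proj_def dbar1_eq dbar1_adj_eq dbar2_adj_eq ins_W1_def dbar2_eq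
    using alt2_entries[OF assms] by (cases a; cases c; cases d; simp add: kron_def)
qed

lemma alt2_lap2_proj:
  assumes "alt2 \<psi>"
  shows "alt2 (lap2_proj \<psi>)"
  unfolding alt2_def
proof (intro allI)
  fix a c d
  have "\<psi> a c d = - \<psi> a d c"
    using assms unfolding alt2_def by blast
  then show "lap2_proj \<psi> a c d = - lap2_proj \<psi> a d c"
    by (cases a; cases c; cases d; simp add: lap2_proj_def)
qed

lemma lap2_proj_idem: "lap2_proj (lap2_proj \<psi>) = lap2_proj \<psi>"
  unfolding lap2_proj_def by (intro ext) auto

lemma lap2_proj_diff:
  "lap2_proj (\<lambda>a c d. f a c d - g a c d) = (\<lambda>a c d. lap2_proj f a c d - lap2_proj g a c d)"
  unfolding lap2_proj_def by (intro ext) auto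

lemma ip2_lap2_proj_eq_0:
  assumes "lap2_proj k = (\<lambda>_ _ _. 0)"
  shows "ip2 (lap2_proj \<psi>) k = 0"
proof -
  have k0: "lap2_proj k a c d = 0" for a c d
    using assms by (simp add: fun_eq_iff)
  have orth: "lap2_proj \<psi> a c d * cnj (k a c d) = 0" for a c d
    using k0[of a c d] unfolding lap2_proj_def by (auto split: if_splits)
  show ?thesis
    unfolding ip2_def orth by simp
qed

lemma harm2_iff: "\<psi> \<in> harm2 \<longleftrightarrow> alt2 \<psi> \<and> lap2_proj \<psi> = (\<lambda>_ _ _. 0)"
  by (cases "alt2 \<psi>") (simp_all add: harm2_def lap2_eq)

lemma harm2_diff: "f \<in> harm2 \<Longrightarrow> g \<in> harm2 \<Longrightarrow> (\<lambda>a c d. f a c d - g a c d) \<in> harm2"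
  by (simp add: harm2_iff alt2_diff lap2_proj_diff)

lemma eq_if_orthogonal_harm2:
  assumes "(\<lambda>a c d. f a c d - g a c d) \<in> harm2"
    and "\<forall>k\<in>harm2. ip2 f k = 0" and "\<forall>k\<in>harm2. ip2 g k = 0"
  shows "f = g"
proof -
  let ?k = "\<lambda>a c d. f a c d - g a c d"
  have "ip2 ?k ?k = ip2 f ?k - ip2 g ?k"
    by (rule ip2_diff_left)
  also have "\<dots> = 0"
    using assms by simp
  finally show ?thesis
    by (simp add: ip2_self_eq_0_iff fun_eq_iff)
qed

lemma orthogonal_harm2_lap2_proj: "\<forall>k\<in>harm2. ip2 (lap2_proj \<psi>) k = 0"
  by (simp add: harm2_iff ip2_lap2_proj_eq_0)

lemma Hproj2_eq:
  assumes "alt2 \<psi>"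
  shows "Hproj2 \<psi> = (\<lambda>a c d. \<psi> a c d - lap2_proj \<psi> a c d)" (is "_ = ?h")
  unfolding Hproj2_def
proof (rule the_equality)
  have residual: "(\<lambda>a c d. \<psi> a c d - ?h a c d) = lap2_proj \<psi>"
    by (simp add: fun_eq_iff)
  have h_harm: "?h \<in> harm2"
    using assms by (simp add: harm2_iff alt2_diff alt2_lap2_proj lap2_proj_diff lap2_proj_idem)
  then show "?h \<in> harm2 \<and> (\<forall>k\<in>harm2. ip2 (\<lambda>a c d. \<psi> a c d - ?h a c d) k = 0)"
    unfolding residual using orthogonal_harm2_lap2_proj by blast
  fix h assume h: "h \<in> harm2 \<and> (\<forall>k\<in>harm2. ip2 (\<lambda>a c d. \<psi> a c d - h a c d) k = 0)"
  have "(\<lambda>a c d. (\<psi> a c d - h a c d) - lap2_proj \<psi> a c d) = (\<lambda>a c d. ?h a c d - h a c d)"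
    by (simp add: fun_eq_iff)
  then have residual_h: "(\<lambda>a c d. \<psi> a c d - h a c d) = lap2_proj \<psi>"
    using h h_harm harm2_diff orthogonal_harm2_lap2_proj by (intro eq_if_orthogonal_harm2) auto
  show "h = ?h"
    by (simp flip: residual_h)
qed

lemma Green2_eq:
  assumes "alt2 \<psi>"
  shows "Green2 \<psi> = lap2_proj \<psi>"
  unfolding Green2_def
proof (rule the_equality)
  have residual: "(\<lambda>a c d. \<psi> a c d - Hproj2 \<psi> a c d) = lap2_proj \<psi>"
    by (simp add: Hproj2_eq[OF assms] fun_eq_iff)
  show "alt2 (lap2_proj \<psi>) \<and> (\<forall>k\<in>harm2. ip2 (lap2_proj \<psi>) k = 0)
      \<and> lap2 (lap2_proj \<psi>) = (\<lambda>a c d. \<psi> a c d - Hproj2 \<psi> a c d)"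
    unfolding residual using assms
    by (simp add: alt2_lap2_proj orthogonal_harm2_lap2_proj lap2_eq lap2_proj_idem)
  fix \<eta>
  assume \<eta>: "alt2 \<eta> \<and> (\<forall>k\<in>harm2. ip2 \<eta> k = 0)
      \<and> lap2 \<eta> = (\<lambda>a c d. \<psi> a c d - Hproj2 \<psi> a c d)"
  then have "lap2_proj \<eta> = lap2_proj \<psi>"
    using lap2_eq[of \<eta>] residual by simp
  then have "(\<lambda>a c d. \<eta> a c d - lap2_proj \<psi> a c d) \<in> harm2"
    using \<eta> assms by (simp add: harm2_iff alt2_diff alt2_lap2_proj lap2_proj_diff lap2_proj_idem)
  then show "\<eta> = lap2_proj \<psi>"
    using \<eta> orthogonal_harm2_lap2_proj by (intro eq_if_orthogonal_harm2) auto
qed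

lemma dstarG_eq:
  assumes "alt2 \<psi>"
  shows "dstarG \<psi> = (\<chi> i. if fst i = I2 \<and> snd i \<noteq> I1 then \<psi> I3 (snd i) I1 else 0)"
  unfolding dstarG_def Green2_eq[OF assms] dbar1_adj_eq vec_eq_iff
  using alt2_entries[OF assms] by (simp add: all_i3_eq lap2_proj_def)

lemma alt2_SN: "alt2 (SN \<phi> \<psi>)"
  unfolding alt2_def SN_eq by (simp add: algebra_simps)

lemma dstarG_SN:
  "dstarG (SN \<phi> \<psi>) = (\<chi> i. if i = (I2, I2) then - (\<phi>$(I3,I3) * \<psi>$(I1,I1) + \<psi>$(I3,I3) * \<phi>$(I1,I1)) else 0)"
  unfolding dstarG_eq[OF alt2_SN] unfolding vec_eq_iff SN_eq by (simp add: all_i3_eq kron_def)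

section \<open>The Kuranishi series\<close>

declare kur.simps [simp del]

lemma kur_0: "kur \<mu> 0 = 0"
  by (simp add: kur.simps)

lemma kur_Suc_0: "kur \<mu> (Suc 0) = \<mu>"
  by (simp add: kur.simps)

lemma kur_ge_2:
  "2 \<le> r \<Longrightarrow> kur \<mu> r = (- 1/2 :: complex) *s (\<Sum>s\<in>{1..<r}. dstarG (SN (kur \<mu> s) (kur \<mu> (r - s))))"
  by (subst kur.simps) simp

lemma kur_2: "kur \<mu> 2 = (\<chi> i. if i = (I2, I2) then \<mu>$(I1,I1) * \<mu>$(I3,I3) else 0)"
proof -
  have "{1..<2::nat} = {1}"
    by auto
  then show ?thesis
    unfolding kur_ge_2[OF order_refl] by (simp add: kur_Suc_0 dstarG_SN vec_eq_iff)
qed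

lemma kur_diagonal_eq_0:
  assumes "2 \<le> r"
  shows "kur \<mu> r $ (I1, I1) = 0" "kur \<mu> r $ (I3, I3) = 0"
  by (simp_all add: kur_ge_2[OF assms] dstarG_SN sum_component)

lemma kur_eq_0:
  assumes "3 \<le> r"
  shows "kur \<mu> r = 0"
proof -
  have "dstarG (SN (kur \<mu> s) (kur \<mu> (r - s))) = 0" if "s \<in> {1..<r}" for s
  proof (cases "2 \<le> s")
    case True
    then show ?thesis
      by (simp add: kur_diagonal_eq_0 dstarG_SN vec_eq_iff)
  next
    case False
    then have "2 \<le> r - s"
      using that assms by auto
    then show ?thesis
      by (simp add: kur_diagonal_eq_0 dstarG_SN vec_eq_iff)
  qed
  then show ?thesis
    using assms by (simp add: kur_ge_2)
qed

lemma kur_sums: "kur \<mu> sums (\<mu> + kur \<mu> 2)"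
proof -
  have "kur \<mu> sums (\<Sum>n\<in>{1, 2}. kur \<mu> n)"
  proof (rule sums_finite)
    fix n :: nat
    assume "n \<notin> {1, 2}"
    then have "n = 0 \<or> 3 \<le> n"
      by auto
    then show "kur \<mu> n = 0"
      using kur_0 kur_eq_0 by auto
  qed simp
  then show ?thesis
    by (simp add: kur_Suc_0)
qed

lemma integrable_iff:
  "integrable \<mu> \<longleftrightarrow> (\<forall>a c d.
     dbar1 (\<mu> + kur \<mu> 2) a c d + (1/2) * SN (\<mu> + kur \<mu> 2) (\<mu> + kur \<mu> 2) a c d = 0)"
  using kur_sums[of \<mu>] unfolding integrable_def by (simp add: sums_summable sums_unique[symmetric])

text \<open>For closed \<open>\<mu>\<close> the term \<open>dbar \<phi>\<^sub>2\<close> cancels the \<open>(W; conj T2, conj T1)\<close>-entry of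
  \<open>{\<mu>, \<mu>}/2\<close>; every remaining entry is a multiple of \<open>\<mu>\<^sup>1\<^sub>3\<close>, and the
  \<open>(T1; conj T2, conj T3)\<close>-entry is \<open>-(\<mu>\<^sup>1\<^sub>3)\<^sup>2\<close>.\<close>
lemma integrable_iff_closed:
  assumes "closed1 \<mu>"
  shows "integrable \<mu> \<longleftrightarrow> \<mu> $ (I1, I3) = 0"
proof -
  have "\<mu> $ (I2, I2) = 0" "\<mu> $ (I2, I3) = 0"
    using assms closed1_iff by auto
  then show ?thesis
    unfolding integrable_iff
    by (auto simp: dbar1_eq SN_eq kur_2 kron_def all_i3_eq)
qed

section \<open>Dimensions\<close>

lemma set_plus_absorb:
  fixes S T :: "'a::monoid_add set"
  assumes "0 \<in> T" and "\<And>x y. x \<in> S \<Longrightarrow> y \<in> T \<Longrightarrow> x + y \<in> S"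
  shows "{x + y | x y. x \<in> S \<and> y \<in> T} = S"
  using assms by (auto, metis add.right_neutral)

lemma range_dbar0: "range dbar0 = {x. \<forall>i. i \<notin> {(I3, I1)} \<longrightarrow> x $ i = 0}"
proof (intro set_eqI iffI)
  fix x :: A1
  assume "x \<in> {x. \<forall>i. i \<notin> {(I3, I1)} \<longrightarrow> x $ i = 0}"
  then have "x = dbar0 (\<chi> a. if a = I2 then - x $ (I3, I1) else 0)"
    by (auto simp: dbar0_eq vec_eq_iff)
  then show "x \<in> range dbar0"
    by blast
qed (auto simp: dbar0_eq)

lemma dim_in_H1_coordinate_subspace:
  assumes "S = {x. \<forall>i. i \<notin> d \<longrightarrow> x $ i = 0}" and "(I3, I1) \<in> d"
  shows "dim_in_H1 S = card d - 1"
proof -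
  have absorb: "{x + y | x y. x \<in> S \<and> y \<in> range dbar0} = S"
    using assms by (intro set_plus_absorb) (auto simp: range_dbar0, metis)
  show ?thesis
    unfolding dim_in_H1_def absorb unfolding assms(1) range_dbar0 dim_substandard_cart by simp
qed

lemma dim_H1: "dim_H1 = 6"
  unfolding dim_H1_def
  by (subst dim_in_H1_coordinate_subspace
        [where d = "{(I1,I1), (I1,I2), (I1,I3), (I2,I1), (I3,I1), (I3,I2), (I3,I3)}"])
     (auto simp: closed1_iff all_i3_eq)

lemma dim_in_H1_conditionA: "dim_in_H1 {\<mu>. closed1 \<mu> \<and> conditionA \<mu>} = 4"
  by (subst dim_in_H1_coordinate_subspace[where d = "{(I1,I2), (I2,I1), (I3,I1), (I3,I2), (I3,I3)}"])
     (auto simp: closed1_iff conditionA_iff all_i3_eq)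

lemma dim_Kuranishi_space: "vec.dim {\<mu>. harmonic1 \<mu> \<and> integrable \<mu>} = 5"
proof -
  have Kuranishi_space: "{\<mu>. harmonic1 \<mu> \<and> integrable \<mu>} =
      {x. \<forall>i. i \<notin> {(I1,I1), (I1,I2), (I2,I1), (I3,I2), (I3,I3)} \<longrightarrow> x $ i = 0}"
    by (auto simp: harmonic1_iff closed1_iff integrable_iff_closed all_i3_eq)
  show ?thesis
    unfolding Kuranishi_space dim_substandard_cart by simp
qed

theorem mainTheorem14:
  shows
  \<comment> \<open>(0) the frame: T_a are (1,0), omega/conj omega are dual, bracket table\<close>
  "(\<forall>a. cJ (e a) = \<i> *s e a) \<and>
   (\<forall>a b. \<omega> a (e b) = kron a b \<and> \<omega> a (eb b) = 0 \<and> \<omega>b a (eb b) = kron a b \<and> \<omega>b a (e b) = 0) \<and>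
   (\<forall>s a t b. cbr (fr s a) (fr t b) =
      (if (s, a, t, b) = (True, I1, False, I2) then - e I3
       else if (s, a, t, b) = (False, I2, True, I1) then e I3
       else if (s, a, t, b) = (True, I2, False, I1) then eb I3
       else if (s, a, t, b) = (False, I1, True, I2) then - eb I3
       else 0)) \<and>
  \<comment> \<open>(i)\<close>
   (\<forall>\<mu>. closed1 \<mu> \<longleftrightarrow> \<mu> $ (I2, I2) = 0 \<and> \<mu> $ (I2, I3) = 0) \<and>
   dim_H1 = 6 \<and>
   (\<forall>\<mu>. harmonic1 \<mu> \<longleftrightarrow> closed1 \<mu> \<and> \<mu> $ (I3, I1) = 0) \<and>
  \<comment> \<open>(ii)\<close>
   (\<forall>\<mu>. closed1 \<mu> \<longrightarrow> (conditionA \<mu> \<longleftrightarrow> \<mu> $ (I1, I1) = 0 \<and> \<mu> $ (I1, I3) = 0)) \<and>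
   dim_in_H1 {\<mu>. closed1 \<mu> \<and> conditionA \<mu>} = 4 \<and>
  \<comment> \<open>(iii)\<close>
   (\<forall>\<mu>. harmonic1 \<mu> \<longrightarrow>
      kur \<mu> 2 = (\<chi> i. if i = (I2, I2) then \<mu> $ (I1, I1) * \<mu> $ (I3, I3) else 0) \<and>
      (integrable \<mu> \<longleftrightarrow> \<mu> $ (I1, I3) = 0)) \<and>
   vec.dim {\<mu>. harmonic1 \<mu> \<and> integrable \<mu>} = 5"
proof -
  have Kuranishi: "\<forall>\<mu>. harmonic1 \<mu> \<longrightarrow>
      kur \<mu> 2 = (\<chi> i. if i = (I2, I2) then \<mu> $ (I1, I1) * \<mu> $ (I3, I3) else 0) \<and>
      (integrable \<mu> \<longleftrightarrow> \<mu> $ (I1, I3) = 0)"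
    using kur_2 integrable_iff_closed harmonic1_iff by blast
  show ?thesis
    using cJ_e omega_e omega_eb omegab_eb omegab_e cbr_fr closed1_iff dim_H1 harmonic1_iff
      conditionA_iff dim_in_H1_conditionA Kuranishi dim_Kuranishi_space
    by blast
qed

end
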